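(* Let $\mathcal I$ be an ideal on $\omega$, let $X$ be a topological space with $X=\bigcup\{X_\alpha:\alpha<\kappa\}$ for a cardinal $\kappa$, and let $(f_n)$ be a sequence in $\mathcal C(X)$. (1) If $\kappa<\mathfrak b_s(\mathcal I)$ and $(f_n\restriction X_\alpha)$ is $\mathcal I$-quasi-normally convergent to $0$ for every $\alpha<\kappa$, then $(f_n)$ is $\mathcal I$-quasi-normally convergent to $0$. (2) If $\kappa<\mathfrak b_\sigma(\mathcal I)$ and $(f_n\restriction X_\alpha)$ is $\mathcal I$-$\sigma$-uniformly convergent to $0$ for every $\alpha<\kappa$, then $(f_n)$ is $\mathcal I$-$\sigma$-uniformly convergent to $0$.
   Context: An ideal on $\omega$ is a family $\mathcal I\subseteq\mathcal P(\omega)$ closed under finite unions and subsets, containing all finite sets, with $\omega\notin\mathcal I$. A real sequence $(a_n)$ is $\mathcal I$-convergent to $0$ if $\{n:|a_n|\ge\varepsilon\}\in\mathcal I$ for all $\varepsilon>0$. For a sequence $(f_n)$ of real functions on a set $Y$: $\mathcal I$-uniform convergence to $0$ means $\{n:\exists x\in Y\,(|f_n(x)|\ge\varepsilon)\}\in\mathcal I$ for each $\varepsilon>0$; $\mathcal I$-$\sigma$-uniform means $Y=\bigcup_{k\in\omega}Y_k$ with $(f_n\restriction Y_k)$ $\mathcal I$-uniformly convergent to $0$ for each $k$; $\mathcal I$-quasi-normal means there is a sequence $(\varepsilon_n)$ of positive reals $\mathcal I$-convergent to $0$ with $\{n:|f_n(x)|\ge\varepsilon_n\}\in\mathcal I$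 for each $x\in Y$. $\mathcal C(X)$ = continuous real functions on $X$. Cardinals (convention $\min\emptyset=\infty$, $\kappa<\infty$ for all cardinals): $\widehat{\mathcal P}_{\mathcal I}$ = sequences $(A_n)\in\mathcal I^\omega$ of pairwise disjoint sets; $\mathcal P_{\mathcal I}$ = those with $\bigcup_nA_n=\omega$; $\mathcal M_{\mathcal I}$ = sequences $(E_k)\in\mathcal I^\omega$ with $E_k\subseteq E_{k+1}$. $\mathfrak b_s(\mathcal I)=\min\{|\mathcal E|:\mathcal E\subseteq\widehat{\mathcal P}_{\mathcal I}$ and for every $(A_n)\in\mathcal P_{\mathcal I}$ there is $(E_n)\in\mathcal E$ with $\bigcup_n(A_{n+1}\cap\bigcup_{i\le n}E_i)\notin\mathcal I\}$; $\mathfrak b_\sigma(\mathcal I)=\min\{|\mathcal E|:\mathcal E\subseteq\mathcal M_{\mathcal I}$ and for every $(A_n)\in\mathcal M_{\mathcal I}$ there is $(E_n)\in\mathcal E$ with $E_n\not\subseteq A_n$ for infinitely many $n\}$. *)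

theory Defs
  imports "HOL-Analysis.Analysis"
begin

definition is_ideal :: "nat set set \<Rightarrow> bool" where
  "is_ideal I \<longleftrightarrow>
     (\<forall>A B. A \<in> I \<longrightarrow> B \<in> I \<longrightarrow> A \<union> B \<in> I) \<and>
     (\<forall>A B. A \<in> I \<longrightarrow> B \<subseteq> A \<longrightarrow> B \<in> I) \<and>
     (\<forall>F. finite F \<longrightarrow> F \<in> I) \<and>
     (UNIV::nat set) \<notin> I"

definition I_conv0 :: "nat set set \<Rightarrow> (nat \<Rightarrow> real) \<Rightarrow> bool" where
  "I_conv0 I a \<longleftrightarrow> (\<forall>\<epsilon>>0. {n. \<bar>a n\<bar> \<ge> \<epsilon>} \<in> I)"

definition I_uniform0 :: "nat set set \<Rightarrow> (nat \<Rightarrow> 'a \<Rightarrow> real) \<Rightarrow> 'a set \<Rightarrow> bool" where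
  "I_uniform0 I f Y \<longleftrightarrow> (\<forall>\<epsilon>>0. {n. \<exists>x\<in>Y. \<bar>f n x\<bar> \<ge> \<epsilon>} \<in> I)"

definition I_sigma_uniform0 :: "nat set set \<Rightarrow> (nat \<Rightarrow> 'a \<Rightarrow> real) \<Rightarrow> 'a set \<Rightarrow> bool" where
  "I_sigma_uniform0 I f Y \<longleftrightarrow>
     (\<exists>Yk :: nat \<Rightarrow> 'a set. Y = (\<Union>k. Yk k) \<and> (\<forall>k. I_uniform0 I f (Yk k)))"

definition I_quasi_normal0 :: "nat set set \<Rightarrow> (nat \<Rightarrow> 'a \<Rightarrow> real) \<Rightarrow> 'a set \<Rightarrow> bool" where
  "I_quasi_normal0 I f Y \<longleftrightarrow>
     (\<exists>\<epsilon> :: nat \<Rightarrow> real. (\<forall>n. \<epsilon> n > 0) \<and> I_conv0 I \<epsilon> \<and>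
        (\<forall>x\<in>Y. {n. \<bar>f n x\<bar> \<ge> \<epsilon> n} \<in> I))"

definition hatP :: "nat set set \<Rightarrow> (nat \<Rightarrow> nat set) set" where
  "hatP I = {A. (\<forall>n. A n \<in> I) \<and> (\<forall>m n. m \<noteq> n \<longrightarrow> A m \<inter> A n = {})}"

definition PI :: "nat set set \<Rightarrow> (nat \<Rightarrow> nat set) set" where
  "PI I = {A. A \<in> hatP I \<and> (\<Union>n. A n) = UNIV}"

definition MI :: "nat set set \<Rightarrow> (nat \<Rightarrow> nat set) set" where
  "MI I = {E. (\<forall>n. E n \<in> I) \<and> (\<forall>k. E k \<subseteq> E (Suc k))}"

text \<open>Families witnessing the definitions of b_s(I) and b_sigma(I).\<close>
definition bs_witness :: "nat set set \<Rightarrow> (nat \<Rightarrow> nat set) set \<Rightarrow> bool" where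
  "bs_witness I \<E> \<longleftrightarrow> \<E> \<subseteq> hatP I \<and>
     (\<forall>A\<in>PI I. \<exists>E\<in>\<E>. (\<Union>n. A (Suc n) \<inter> (\<Union>i\<le>n. E i)) \<notin> I)"

definition bsigma_witness :: "nat set set \<Rightarrow> (nat \<Rightarrow> nat set) set \<Rightarrow> bool" where
  "bsigma_witness I \<E> \<longleftrightarrow> \<E> \<subseteq> MI I \<and>
     (\<forall>A\<in>MI I. \<exists>E\<in>\<E>. infinite {n. \<not> E n \<subseteq> A n})"

text \<open>|K| < b_s(I): |K| is strictly below the cardinality of every witness family
  (vacuous if there is none, matching the convention min {} = infinity).\<close>
definition card_lt_bs :: "'k set \<Rightarrow> nat set set \<Rightarrow> bool" where
  "card_lt_bs K I \<longleftrightarrow> (\<forall>\<E>. bs_witness I \<E> \<longrightarrow> (card_of K, card_of \<E>) \<in> ordLess)"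

definition card_lt_bsigma :: "'k set \<Rightarrow> nat set set \<Rightarrow> bool" where
  "card_lt_bsigma K I \<longleftrightarrow> (\<forall>\<E>. bsigma_witness I \<E> \<longrightarrow> (card_of K, card_of \<E>) \<in> ordLess)"

end

theory Submission
  imports Defs
begin

text \<open>Both parts are diagonalisations over the pieces X_alpha. For (1), a witness
  eps_alpha of quasi-normal convergence on X_alpha is coded by its level sets
  G_alpha i, roughly {n. floor (1 / eps_alpha n) = i + 1}: a disjoint sequence in I. Since
  kappa < b_s(I), some partition (A_m) of omega into sets of I meets
  U_m (A_(m+1) inter U_(i<=m) G_alpha i) in a set of I for every alpha. The sequence
  eps n = 1/(m+1) for n in A_m is then I-convergent and, off a set of I, at least eps_alpha;
  so it witnesses quasi-normal convergence on all of X.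
  For (2), a decomposition X_alpha = U_k Y_alpha_k is coded by the increasing sequence of
  sets of those n with |f_n| >= 1/(j+1) somewhere on Y_alpha_0, ..., Y_alpha_j. Since
  kappa < b_sigma(I), one increasing sequence (A_j) in I eventually contains all of them.
  Grouping the Y_alpha_k by k and by the index j from which this containment holds gives
  countably many pieces of X on which the convergence is I-uniform.\<close>

lemma is_ideal_Un: "is_ideal I \<Longrightarrow> A \<in> I \<Longrightarrow> B \<in> I \<Longrightarrow> A \<union> B \<in> I"
  unfolding is_ideal_def by blast

lemma is_ideal_subset: "is_ideal I \<Longrightarrow> A \<in> I \<Longrightarrow> B \<subseteq> A \<Longrightarrow> B \<in> I"
  unfolding is_ideal_def by blast

lemma is_ideal_UN_finite:
  assumes "is_ideal I" "finite S" "\<And>s. s \<in> S \<Longrightarrow> g s \<in> I"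
  shows "(\<Union>s\<in>S. g s) \<in> I"
  using assms(2,3)
proof (induction S rule: finite_induct)
  case empty
  have "finite {}" by simp
  then show ?case using assms(1) unfolding is_ideal_def by simp
next
  case (insert x F)
  then show ?case using is_ideal_Un[OF assms(1)] by simp
qed

lemma card_of_image_not_ordLess: "(card_of K, card_of (g ` K)) \<notin> ordLess"
  using card_of_image not_ordLess_ordLeq by blast

lemma card_lt_bs_image: "card_lt_bs K I \<Longrightarrow> \<not> bs_witness I (g ` K)"
  unfolding card_lt_bs_def using card_of_image_not_ordLess by blast

lemma card_lt_bsigma_image: "card_lt_bsigma K I \<Longrightarrow> \<not> bsigma_witness I (g ` K)"
  unfolding card_lt_bsigma_def using card_of_image_not_ordLess by blast

text \<open>The shift by one (level 0 collects all n with 1 / eps n < 2) matches the offset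
  between A (Suc m) and the levels up to m in the definition of b_s(I).\<close>
definition level_sets :: "(nat \<Rightarrow> real) \<Rightarrow> nat \<Rightarrow> nat set" where
  "level_sets \<epsilon> i = {n. nat \<lfloor>1 / \<epsilon> n\<rfloor> - 1 = i}"

lemma level_le_iff:
  fixes x :: real
  assumes "x > 0"
  shows "nat \<lfloor>1 / x\<rfloor> - 1 \<le> m \<longleftrightarrow> 1 / (real m + 2) < x"
proof -
  have "nat \<lfloor>1 / x\<rfloor> - 1 \<le> m \<longleftrightarrow> 1 / x < real m + 2" by linarith
  also have "\<dots> \<longleftrightarrow> 1 / (real m + 2) < x"
    using assms by (simp add: field_simps)
  finally show ?thesis .
qed

lemma level_sets_hatP:
  assumes I: "is_ideal I" and pos: "\<forall>n. \<epsilon> n > 0" and conv: "I_conv0 I \<epsilon>"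
  shows "level_sets \<epsilon> \<in> hatP I"
proof -
  have "level_sets \<epsilon> i \<in> I" for i
  proof -
    have "level_sets \<epsilon> i \<subseteq> {n. \<bar>\<epsilon> n\<bar> \<ge> 1 / (real i + 2)}"
    proof
      fix n
      assume "n \<in> level_sets \<epsilon> i"
      then have "1 / (real i + 2) < \<epsilon> n"
        using level_le_iff[of "\<epsilon> n" i] pos unfolding level_sets_def by simp
      then show "n \<in> {n. \<bar>\<epsilon> n\<bar> \<ge> 1 / (real i + 2)}" by simp
    qed
    moreover have "{n. \<bar>\<epsilon> n\<bar> \<ge> 1 / (real i + 2)} \<in> I"
      using conv unfolding I_conv0_def by (simp add: add_pos_nonneg)
    ultimately show ?thesis using is_ideal_subset[OF I] by blast
  qed
  then show ?thesis unfolding hatP_def level_sets_def by auto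
qed

definition partition_index :: "(nat \<Rightarrow> nat set) \<Rightarrow> nat \<Rightarrow> nat" where
  "partition_index A n = (SOME m. n \<in> A m)"

definition partition_rate :: "(nat \<Rightarrow> nat set) \<Rightarrow> nat \<Rightarrow> real" where
  "partition_rate A n = 1 / (real (partition_index A n) + 1)"

lemma mem_partition_index: "A \<in> PI I \<Longrightarrow> n \<in> A (partition_index A n)"
  unfolding partition_index_def PI_def by (rule someI_ex) blast

lemma partition_rate_pos: "partition_rate A n > 0"
  unfolding partition_rate_def by simp

lemma partition_rate_I_conv0:
  assumes I: "is_ideal I" and A: "A \<in> PI I"
  shows "I_conv0 I (partition_rate A)"
  unfolding I_conv0_def
proof (intro allI impI)
  fix d :: real
  assume d: "d > 0"
  have "{n. \<bar>partition_rate A n\<bar> \<ge> d} \<subseteq> (\<Union>m\<le>nat \<lceil>1 / d\<rceil>. A m)"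
  proof
    fix n
    assume "n \<in> {n. \<bar>partition_rate A n\<bar> \<ge> d}"
    then have "real (partition_index A n) + 1 \<le> 1 / d"
      using d unfolding partition_rate_def by (simp add: field_simps)
    then have "partition_index A n \<le> nat \<lceil>1 / d\<rceil>" by linarith
    then show "n \<in> (\<Union>m\<le>nat \<lceil>1 / d\<rceil>. A m)" using mem_partition_index[OF A] by blast
  qed
  moreover have "(\<Union>m\<le>nat \<lceil>1 / d\<rceil>. A m) \<in> I"
    using A by (intro is_ideal_UN_finite[OF I]) (auto simp: PI_def hatP_def)
  ultimately show "{n. \<bar>partition_rate A n\<bar> \<ge> d} \<in> I" using is_ideal_subset[OF I] by blast
qed

lemma partition_rate_almost_ge:
  assumes I: "is_ideal I" and A: "A \<in> PI I" and pos: "\<forall>n. \<epsilon> n > 0"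
    and small: "(\<Union>m. A (Suc m) \<inter> (\<Union>i\<le>m. level_sets \<epsilon> i)) \<in> I"
  shows "{n. partition_rate A n < \<epsilon> n} \<in> I"
proof -
  have "{n. partition_rate A n < \<epsilon> n} \<subseteq> A 0 \<union> (\<Union>m. A (Suc m) \<inter> (\<Union>i\<le>m. level_sets \<epsilon> i))"
  proof
    fix n
    assume n: "n \<in> {n. partition_rate A n < \<epsilon> n}"
    show "n \<in> A 0 \<union> (\<Union>m. A (Suc m) \<inter> (\<Union>i\<le>m. level_sets \<epsilon> i))"
    proof (cases "partition_index A n")
      case 0
      then show ?thesis using mem_partition_index[OF A, of n] by simp
    next
      case (Suc m)
      then have "1 / (real m + 2) < \<epsilon> n"
        using n unfolding partition_rate_def by (simp add: add.commute)
      then have "n \<in> (\<Union>i\<le>m. level_sets \<epsilon> i)"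
        using level_le_iff[OF pos[rule_format]] unfolding level_sets_def by auto
      then show ?thesis using mem_partition_index[OF A, of n] Suc by auto
    qed
  qed
  moreover have "A 0 \<in> I" using A unfolding PI_def hatP_def by blast
  ultimately show ?thesis using is_ideal_Un[OF I _ small] is_ideal_subset[OF I] by blast
qed

lemma common_lower_rate:
  assumes I: "is_ideal I" and K: "card_lt_bs K I"
    and \<epsilon>: "\<forall>\<alpha>\<in>K. (\<forall>n. \<epsilon> \<alpha> n > 0) \<and> I_conv0 I (\<epsilon> \<alpha>)"
  obtains e where "\<forall>n. e n > 0" "I_conv0 I e" "\<forall>\<alpha>\<in>K. {n. e n < \<epsilon> \<alpha> n} \<in> I"
proof -
  have "(\<lambda>\<alpha>. level_sets (\<epsilon> \<alpha>)) ` K \<subseteq> hatP I"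
    using level_sets_hatP[OF I] \<epsilon> by blast
  with card_lt_bs_image[OF K] obtain A where A: "A \<in> PI I"
    and small: "\<forall>\<alpha>\<in>K. (\<Union>m. A (Suc m) \<inter> (\<Union>i\<le>m. level_sets (\<epsilon> \<alpha>) i)) \<in> I"
    unfolding bs_witness_def by blast
  show thesis
  proof (rule that)
    show "\<forall>n. partition_rate A n > 0" by (simp add: partition_rate_pos)
    show "I_conv0 I (partition_rate A)" by (rule partition_rate_I_conv0[OF I A])
    show "\<forall>\<alpha>\<in>K. {n. partition_rate A n < \<epsilon> \<alpha> n} \<in> I"
      using \<epsilon> small by (auto intro: partition_rate_almost_ge[OF I A])
  qed
qed

lemma I_quasi_normal0_UN:
  assumes I: "is_ideal I" and K: "card_lt_bs K I"
    and qn: "\<forall>\<alpha>\<in>K. I_quasi_normal0 I f (XA \<alpha>)"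
  shows "I_quasi_normal0 I f (\<Union>\<alpha>\<in>K. XA \<alpha>)"
proof -
  obtain \<epsilon> where \<epsilon>: "\<forall>\<alpha>\<in>K. (\<forall>n. \<epsilon> \<alpha> n > 0) \<and> I_conv0 I (\<epsilon> \<alpha>) \<and>
      (\<forall>x\<in>XA \<alpha>. {n. \<bar>f n x\<bar> \<ge> \<epsilon> \<alpha> n} \<in> I)"
    using bchoice[OF qn[unfolded I_quasi_normal0_def]] by blast
  obtain e where e: "\<forall>n. e n > 0" "I_conv0 I e" "\<forall>\<alpha>\<in>K. {n. e n < \<epsilon> \<alpha> n} \<in> I"
    using common_lower_rate[OF I K] \<epsilon> by blast
  have "{n. \<bar>f n x\<bar> \<ge> e n} \<in> I" if "\<alpha> \<in> K" "x \<in> XA \<alpha>" for \<alpha> x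
  proof -
    have "{n. \<bar>f n x\<bar> \<ge> e n} \<subseteq> {n. \<bar>f n x\<bar> \<ge> \<epsilon> \<alpha> n} \<union> {n. e n < \<epsilon> \<alpha> n}" by auto
    then show ?thesis
      using \<epsilon> e(3) that is_ideal_Un[OF I] is_ideal_subset[OF I] by meson
  qed
  then show ?thesis unfolding I_quasi_normal0_def using e(1,2) by blast
qed

definition large_value_indices :: "(nat \<Rightarrow> 'a \<Rightarrow> real) \<Rightarrow> (nat \<Rightarrow> 'a set) \<Rightarrow> nat \<Rightarrow> nat set" where
  "large_value_indices f Y j = {n. \<exists>k\<le>j. \<exists>x\<in>Y k. 1 / (real j + 1) \<le> \<bar>f n x\<bar>}"

lemma large_value_indices_MI:
  assumes I: "is_ideal I" and Y: "\<forall>k. I_uniform0 I f (Y k)"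
  shows "large_value_indices f Y \<in> MI I"
proof -
  have "large_value_indices f Y j \<in> I" for j
  proof -
    have "large_value_indices f Y j = (\<Union>k\<le>j. {n. \<exists>x\<in>Y k. 1 / (real j + 1) \<le> \<bar>f n x\<bar>})"
      unfolding large_value_indices_def by blast
    also have "\<dots> \<in> I"
      using Y unfolding I_uniform0_def by (intro is_ideal_UN_finite[OF I]) auto
    finally show ?thesis .
  qed
  moreover have "large_value_indices f Y j \<subseteq> large_value_indices f Y (Suc j)" for j
  proof -
    have "1 / (real (Suc j) + 1) \<le> 1 / (real j + 1)" by (simp add: frac_le)
    then show ?thesis
      unfolding large_value_indices_def by (blast intro: le_SucI order_trans)
  qed
  ultimately show ?thesis unfolding MI_def by blast
qed

lemma I_uniform0_UN_dominated:
  assumes I: "is_ideal I" and A: "\<forall>i. A i \<in> I"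
    and dom: "\<forall>\<alpha>\<in>S. \<forall>i\<ge>j. large_value_indices f (Y \<alpha>) i \<subseteq> A i"
  shows "I_uniform0 I f (\<Union>\<alpha>\<in>S. Y \<alpha> k)"
  unfolding I_uniform0_def
proof (intro allI impI)
  fix e :: real
  assume "e > 0"
  then obtain m where m: "inverse (real (Suc m)) < e" using reals_Archimedean by blast
  define i where "i = max j (max k m)"
  have "1 / (real i + 1) \<le> 1 / (real m + 1)"
    unfolding i_def by (simp add: frac_le)
  with m have ie: "1 / (real i + 1) < e" by (simp add: inverse_eq_divide add.commute)
  have "{n. \<exists>x\<in>(\<Union>\<alpha>\<in>S. Y \<alpha> k). e \<le> \<bar>f n x\<bar>} \<subseteq> A i"
  proof
    fix n
    assume "n \<in> {n. \<exists>x\<in>(\<Union>\<alpha>\<in>S. Y \<alpha> k). e \<le> \<bar>f n x\<bar>}"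
    then obtain \<alpha> x where "\<alpha> \<in> S" "x \<in> Y \<alpha> k" "e \<le> \<bar>f n x\<bar>" by blast
    moreover have "k \<le> i" "j \<le> i" unfolding i_def by auto
    moreover have "1 / (real i + 1) \<le> \<bar>f n x\<bar>" using ie \<open>e \<le> \<bar>f n x\<bar>\<close> by linarith
    ultimately have "n \<in> large_value_indices f (Y \<alpha>) i" "j \<le> i" "\<alpha> \<in> S"
      unfolding large_value_indices_def by blast+
    then show "n \<in> A i" using dom by blast
  qed
  then show "{n. \<exists>x\<in>(\<Union>\<alpha>\<in>S. Y \<alpha> k). e \<le> \<bar>f n x\<bar>} \<in> I"
    using is_ideal_subset[OF I] A by blast
qed

lemma I_sigma_uniform0_UN_pairs:
  fixes Z :: "nat \<Rightarrow> nat \<Rightarrow> 'a set"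
  assumes "\<forall>j k. I_uniform0 I f (Z j k)"
  shows "I_sigma_uniform0 I f (\<Union>j k. Z j k)"
proof -
  define Y where "Y p = Z (fst (prod_decode p)) (snd (prod_decode p))" for p
  have "Z j k = Y (prod_encode (j, k))" for j k
    unfolding Y_def by (simp add: prod_encode_inverse)
  then have "(\<Union>j k. Z j k) = (\<Union>p. Y p)"
    unfolding Y_def by blast
  moreover have "\<forall>p. I_uniform0 I f (Y p)"
    using assms unfolding Y_def by blast
  ultimately show ?thesis unfolding I_sigma_uniform0_def by blast
qed

lemma I_sigma_uniform0_UN:
  fixes f :: "nat \<Rightarrow> 'a \<Rightarrow> real" and XA :: "'k \<Rightarrow> 'a set"
  assumes I: "is_ideal I" and K: "card_lt_bsigma K I"
    and su: "\<forall>\<alpha>\<in>K. I_sigma_uniform0 I f (XA \<alpha>)"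
  shows "I_sigma_uniform0 I f (\<Union>\<alpha>\<in>K. XA \<alpha>)"
proof -
  obtain Y :: "'k \<Rightarrow> nat \<Rightarrow> 'a set"
    where Y: "\<forall>\<alpha>\<in>K. XA \<alpha> = (\<Union>k. Y \<alpha> k) \<and> (\<forall>k. I_uniform0 I f (Y \<alpha> k))"
    using bchoice[OF su[unfolded I_sigma_uniform0_def]] by blast
  let ?E = "\<lambda>\<alpha>. large_value_indices f (Y \<alpha>)"
  have "?E ` K \<subseteq> MI I" using large_value_indices_MI[OF I] Y by blast
  with card_lt_bsigma_image[OF K] obtain A where A: "A \<in> MI I"
    and fin: "\<forall>\<alpha>\<in>K. finite {n. \<not> ?E \<alpha> n \<subseteq> A n}"
    unfolding bsigma_witness_def by blast
  define Z where "Z j k = (\<Union>\<alpha>\<in>{\<alpha>\<in>K. \<forall>i\<ge>j. ?E \<alpha> i \<subseteq> A i}. Y \<alpha> k)" for j k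
  have uniform: "\<forall>j k. I_uniform0 I f (Z j k)"
  proof (intro allI)
    fix j k
    show "I_uniform0 I f (Z j k)"
      unfolding Z_def using A by (intro I_uniform0_UN_dominated[OF I]) (auto simp: MI_def)
  qed
  have cover: "(\<Union>\<alpha>\<in>K. XA \<alpha>) = (\<Union>j k. Z j k)"
  proof (intro equalityI subsetI)
    fix x
    assume "x \<in> (\<Union>\<alpha>\<in>K. XA \<alpha>)"
    then obtain \<alpha> k where \<alpha>: "\<alpha> \<in> K" "x \<in> Y \<alpha> k" using Y by blast
    obtain b where "\<forall>n\<in>{n. \<not> ?E \<alpha> n \<subseteq> A n}. n \<le> b"
      using fin \<alpha>(1) finite_nat_set_iff_bounded_le by meson
    then have "\<forall>i\<ge>Suc b. ?E \<alpha> i \<subseteq> A i" by force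
    then have "x \<in> Z (Suc b) k" unfolding Z_def using \<alpha> by blast
    then show "x \<in> (\<Union>j k. Z j k)" by blast
  next
    fix x
    assume "x \<in> (\<Union>j k. Z j k)"
    then obtain \<alpha> k where "\<alpha> \<in> K" "x \<in> Y \<alpha> k" unfolding Z_def by blast
    then show "x \<in> (\<Union>\<alpha>\<in>K. XA \<alpha>)" using Y by blast
  qed
  show ?thesis unfolding cover using uniform by (rule I_sigma_uniform0_UN_pairs)
qed

theorem proposition4p5:
  fixes I :: "nat set set" and X :: "'a topology" and K :: "'k set"
    and XA :: "'k \<Rightarrow> 'a set" and f :: "nat \<Rightarrow> 'a \<Rightarrow> real"
  assumes "is_ideal I"
    and "topspace X = (\<Union>\<alpha>\<in>K. XA \<alpha>)"
    and "\<And>n. continuous_map X euclideanreal (f n)"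
  shows "(card_lt_bs K I \<and> (\<forall>\<alpha>\<in>K. I_quasi_normal0 I f (XA \<alpha>))
            \<longrightarrow> I_quasi_normal0 I f (topspace X))
       \<and> (card_lt_bsigma K I \<and> (\<forall>\<alpha>\<in>K. I_sigma_uniform0 I f (XA \<alpha>))
            \<longrightarrow> I_sigma_uniform0 I f (topspace X))"
  unfolding assms(2)
  using I_quasi_normal0_UN[OF assms(1)] I_sigma_uniform0_UN[OF assms(1)] by blast

end
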